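(* Let $\bm{C}\in\mathbb{R}_+^{n\times m}$ be a cost matrix with nonnegative entries, let $\bm{a}\in\mathbb{R}_+^n$, let $\bm{b}\in\mathbb{R}_+^m$ be a positive measure with total mass $c_{\bm{b}}=\sum_{j=1}^m\bm{b}_j$, let $\tau>0$, and let $r$ be an integer with $2\le r\le\min\{n,m\}$. Let $\mathrm{SR}\text{-}\mathrm{W}^\star(\mu_{\bm{b}})$ be the optimal value of the semi-relaxed problem $\min\{\langle\bm{C},\bm{P}\rangle_F+\tau\,\mathrm{KL}(\bm{P}\bm{1}_m\|\bm{a}):\bm{P}\in\mathbb{R}_+^{n\times m},\ \bm{P}^{\mathrm T}\bm{1}_n=\bm{b}\}$ and $\mathrm{SR}\text{-}\mathrm{W}^\star_r(\mu_{\bm{b}})$ the optimal value of the same problem with the additional constraint $\mathrm{rk}_+(\bm{P})\le r$. Then $$\big|\mathrm{SR}\text{-}\mathrm{W}^\star_r(\mu_{\bm{b}})-\mathrm{SR}\text{-}\mathrm{W}^\star(\mu_{\bm{b}})\big|\le c_{\bm{b}}\Big(\max_{p,q}\bm{C}_{pq}-\min_{p,q}\bm{C}_{pq}\Big)\ln\!\big(\min\{n,m\}/(r-1)\big).$$ In particular, for probability vectors $\bm{a}\in\Delta_n$, $\bm{b}\in\Delta_m$, letting $\mathrm{W}^\star(\mu_{\bm{a}},\mu_{\bm{b}})=\min_{\bm{P}\in\Pi_{\bm{a},\bm{b}}}\langle\bm{C},\bm{P}\rangle_F$ and $\mathrm{W}^\star_r(\mu_{\bm{a}},\mu_{\bm{b}})=\min_{\bm{P}\in\Pi_{\bm{a},\bm{b}},\,\mathrm{rk}_+(\bm{P})\le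 r}\langle\bm{C},\bm{P}\rangle_F$, one has $$\big|\mathrm{W}^\star_r(\mu_{\bm{a}},\mu_{\bm{b}})-\mathrm{W}^\star(\mu_{\bm{a}},\mu_{\bm{b}})\big|\le\Big(\max_{p,q}\bm{C}_{pq}-\min_{p,q}\bm{C}_{pq}\Big)\ln\!\big(\min\{n,m\}/(r-1)\big).$$
   Context: The nonnegative rank $\mathrm{rk}_+(\bm{M})$ of a nonnegative matrix is the least number of nonnegative rank-one matrices summing to $\bm{M}$. $\Pi_{\bm{a},\bm{b}}=\{\bm{P}\in\mathbb{R}_+^{n\times m}:\bm{P}\bm{1}_m=\bm{a},\ \bm{P}^{\mathrm T}\bm{1}_n=\bm{b}\}$. $\mathrm{KL}$ is the (generalized) Kullback–Leibler divergence. $\Delta_d$ is the probability simplex in $\mathbb{R}^d$. *)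

theory Defs
  imports "HOL-Analysis.Analysis"
begin

definition nonneg_mat :: "('n \<Rightarrow> 'm \<Rightarrow> real) \<Rightarrow> bool" where
  "nonneg_mat P \<longleftrightarrow> (\<forall>i j. 0 \<le> P i j)"

definition row_sums :: "('n \<Rightarrow> 'm::finite \<Rightarrow> real) \<Rightarrow> 'n \<Rightarrow> real" where
  "row_sums P = (\<lambda>i. \<Sum>j\<in>UNIV. P i j)"

definition col_sums :: "('n::finite \<Rightarrow> 'm \<Rightarrow> real) \<Rightarrow> 'm \<Rightarrow> real" where
  "col_sums P = (\<lambda>j. \<Sum>i\<in>UNIV. P i j)"

definition frob :: "('n::finite \<Rightarrow> 'm::finite \<Rightarrow> real) \<Rightarrow> ('n \<Rightarrow> 'm \<Rightarrow> real) \<Rightarrow> real" where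
  "frob C P = (\<Sum>i\<in>UNIV. \<Sum>j\<in>UNIV. C i j * P i j)"

definition nonneg_rank :: "('n \<Rightarrow> 'm \<Rightarrow> real) \<Rightarrow> nat" where
  "nonneg_rank P = (LEAST r. \<exists>(u :: nat \<Rightarrow> 'n \<Rightarrow> real) (v :: nat \<Rightarrow> 'm \<Rightarrow> real).
       (\<forall>k i. 0 \<le> u k i) \<and> (\<forall>k j. 0 \<le> v k j) \<and>
       (\<forall>i j. P i j = (\<Sum>k<r. u k i * v k j)))"

definition kl_term :: "real \<Rightarrow> real \<Rightarrow> ereal" where
  "kl_term x y = (if x = 0 then ereal y else if y = 0 then \<infinity>
                  else ereal (x * ln (x / y) - x + y))"

definition KL :: "('n::finite \<Rightarrow> real) \<Rightarrow> ('n \<Rightarrow> real) \<Rightarrow> ereal" where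
  "KL x y = (\<Sum>i\<in>UNIV. kl_term (x i) (y i))"

definition SR_obj :: "('n::finite \<Rightarrow> 'm::finite \<Rightarrow> real) \<Rightarrow> ('n \<Rightarrow> real) \<Rightarrow> real
     \<Rightarrow> ('n \<Rightarrow> 'm \<Rightarrow> real) \<Rightarrow> ereal" where
  "SR_obj C a \<tau> P = ereal (frob C P) + ereal \<tau> * KL (row_sums P) a"

definition SRW :: "('n::finite \<Rightarrow> 'm::finite \<Rightarrow> real) \<Rightarrow> ('n \<Rightarrow> real) \<Rightarrow> ('m \<Rightarrow> real) \<Rightarrow> real \<Rightarrow> ereal" where
  "SRW C a b \<tau> = Inf {SR_obj C a \<tau> P | P. nonneg_mat P \<and> col_sums P = b}"

definition SRW_r :: "('n::finite \<Rightarrow> 'm::finite \<Rightarrow> real) \<Rightarrow> ('n \<Rightarrow> real) \<Rightarrow> ('m \<Rightarrow> real) \<Rightarrow> real \<Rightarrow> nat \<Rightarrow> ereal" where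
  "SRW_r C a b \<tau> r = Inf {SR_obj C a \<tau> P | P. nonneg_mat P \<and> col_sums P = b \<and> nonneg_rank P \<le> r}"

definition transport_polytope :: "('n::finite \<Rightarrow> real) \<Rightarrow> ('m::finite \<Rightarrow> real) \<Rightarrow> ('n \<Rightarrow> 'm \<Rightarrow> real) set" where
  "transport_polytope a b = {P. nonneg_mat P \<and> row_sums P = a \<and> col_sums P = b}"

definition W :: "('n::finite \<Rightarrow> 'm::finite \<Rightarrow> real) \<Rightarrow> ('n \<Rightarrow> real) \<Rightarrow> ('m \<Rightarrow> real) \<Rightarrow> real" where
  "W C a b = Inf (frob C ` transport_polytope a b)"

definition W_r :: "('n::finite \<Rightarrow> 'm::finite \<Rightarrow> real) \<Rightarrow> ('n \<Rightarrow> real) \<Rightarrow> ('m \<Rightarrow> real) \<Rightarrow> nat \<Rightarrow> real" where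
  "W_r C a b r = Inf (frob C ` {P \<in> transport_polytope a b. nonneg_rank P \<le> r})"

definition prob_simplex :: "('k::finite \<Rightarrow> real) set" where
  "prob_simplex = {x. (\<forall>i. 0 \<le> x i) \<and> (\<Sum>i\<in>UNIV. x i) = 1}"

end

theory Submission
  imports Defs
begin

(* Given a nonnegative P and 2 <= r <= n (the number of rows), choose the n - r + 1 rows of least
   total mass; by averaging they carry at most a fraction 1 - (r-1)/n <= ln (n/(r-1)) of the mass.
   Replacing that block by the product of its row and column marginals keeps both marginals of P,
   leaves r - 1 untouched rows plus one rank-one block, hence nonnegative rank at most r, and
   raises the cost by at most (max C - min C) times the mass of the block. The KL term only sees
   the row marginal, so this bounds the gap for the semi-relaxed and for the balanced problem;
   transposing treats the case of fewer columns than rows. *)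

lemma exists_subset_sum_le_average:
  fixes f :: "'a \<Rightarrow> real"
  assumes "finite A" "s \<le> card A"
  shows "\<exists>S\<subseteq>A. card S = s \<and> real (card A) * sum f S \<le> real s * sum f A"
  using assms
proof (induction "card A - s" arbitrary: A)
  case 0
  then show ?case by auto
next
  case (Suc d)
  then have "A \<noteq> {}" by auto
  have "Max (f ` A) \<in> f ` A"
    using \<open>finite A\<close> \<open>A \<noteq> {}\<close> by (intro Max_in) auto
  then obtain x where "x \<in> A" "f x = Max (f ` A)"
    by force
  then have x: "x \<in> A" "\<And>y. y \<in> A \<Longrightarrow> f y \<le> f x"
    using \<open>finite A\<close> by auto
  define A' where "A' = A - {x}"
  have card_A: "card A = card A' + 1"
    using Suc.prems(1) x(1) unfolding A'_def by (metis Suc_eq_plus1 card_Suc_Diff1)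
  have sum_A: "sum f A = sum f A' + f x"
    using Suc.prems(1) x(1) unfolding A'_def by (simp add: sum.remove)
  have "\<exists>S\<subseteq>A'. card S = s \<and> real (card A') * sum f S \<le> real s * sum f A'"
  proof (rule Suc.hyps(1))
    show "d = card A' - s" "s \<le> card A'" using Suc.hyps(2) card_A by auto
  qed (simp add: A'_def Suc.prems(1))
  then obtain S where S: "S \<subseteq> A'" "card S = s" "real (card A') * sum f S \<le> real s * sum f A'"
    by blast
  have "sum f S \<le> real s * f x"
    using sum_bounded_above[of S f "f x"] S x(2) by (auto simp: A'_def)
  with S(3) have "real (card A) * sum f S \<le> real s * sum f A"
    by (simp add: card_A sum_A algebra_simps)
  with S show ?case by (auto simp: A'_def)
qed

lemma one_minus_div_le_ln:
  fixes k n :: real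
  assumes "0 < k" "k \<le> n"
  shows "(n - k) / n \<le> ln (n / k)"
proof -
  have "ln (k / n) \<le> k / n - 1" using assms by (intro ln_le_minus_one) simp
  then show ?thesis using assms by (simp add: ln_div diff_divide_distrib)
qed

(* Since nonneg_rank is a LEAST, a bound on it does not by itself provide a factorization;
   explicit factorizations are what survive transposition below. *)
definition has_nonneg_factorization :: "nat \<Rightarrow> ('n \<Rightarrow> 'm \<Rightarrow> real) \<Rightarrow> bool" where
  "has_nonneg_factorization r P \<longleftrightarrow> (\<exists>(u :: nat \<Rightarrow> 'n \<Rightarrow> real) (v :: nat \<Rightarrow> 'm \<Rightarrow> real).
     (\<forall>k i. 0 \<le> u k i) \<and> (\<forall>k j. 0 \<le> v k j) \<and> (\<forall>i j. P i j = (\<Sum>k<r. u k i * v k j)))"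

lemma nonneg_rank_le: "has_nonneg_factorization r P \<Longrightarrow> nonneg_rank P \<le> r"
  unfolding nonneg_rank_def has_nonneg_factorization_def by (rule Least_le)

lemma has_nonneg_factorization_zero: "has_nonneg_factorization 0 (\<lambda>i j. 0)"
  unfolding has_nonneg_factorization_def by auto

lemma has_nonneg_factorization_outer:
  assumes "\<And>i. 0 \<le> u i" "\<And>j. 0 \<le> v j"
  shows "has_nonneg_factorization 1 (\<lambda>i j. u i * v j)"
  unfolding has_nonneg_factorization_def using assms
  by (intro exI[of _ "\<lambda>_. u"] exI[of _ "\<lambda>_. v"]) simp

lemma has_nonneg_factorization_add:
  assumes "has_nonneg_factorization r P" "has_nonneg_factorization s Q"
  shows "has_nonneg_factorization (r + s) (\<lambda>i j. P i j + Q i j)"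
proof -
  obtain u v where u: "\<forall>k i. 0 \<le> u k i" and v: "\<forall>k j. 0 \<le> v k j"
    and P: "\<forall>i j. P i j = (\<Sum>k<r. u k i * v k j)"
    using assms(1) unfolding has_nonneg_factorization_def by blast
  obtain u' v' where u': "\<forall>k i. 0 \<le> u' k i" and v': "\<forall>k j. 0 \<le> v' k j"
    and Q: "\<forall>i j. Q i j = (\<Sum>k<s. u' k i * v' k j)"
    using assms(2) unfolding has_nonneg_factorization_def by blast
  define U where "U k = (if k < r then u k else u' (k - r))" for k
  define V where "V k = (if k < r then v k else v' (k - r))" for k
  have "P i j + Q i j = (\<Sum>k<r + s. U k i * V k j)" for i j
  proof -
    have "(\<Sum>k<r + s. U k i * V k j) = (\<Sum>k<r. U k i * V k j) + (\<Sum>k\<in>{r..<s + r}. U k i * V k j)"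
      by (simp add: lessThan_atLeast0 sum.atLeastLessThan_concat add.commute)
    also have "(\<Sum>k\<in>{r..<s + r}. U k i * V k j) = Q i j"
      using sum.shift_bounds_nat_ivl[of "\<lambda>k. U k i * V k j" 0 r s] Q
      by (simp add: U_def V_def lessThan_atLeast0)
    also have "(\<Sum>k<r. U k i * V k j) = P i j"
      using P by (simp add: U_def V_def)
    finally show ?thesis by simp
  qed
  moreover have "\<forall>k i. 0 \<le> U k i" "\<forall>k j. 0 \<le> V k j"
    using u v u' v' by (simp_all add: U_def V_def)
  ultimately show ?thesis
    unfolding has_nonneg_factorization_def by blast
qed

lemma has_nonneg_factorization_rows:
  assumes "nonneg_mat P" "finite T"
  shows "has_nonneg_factorization (card T) (\<lambda>i j. if i \<in> T then P i j else 0)"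
  using assms(2)
proof (induction T rule: finite_induct)
  case empty
  then show ?case using has_nonneg_factorization_zero by simp
next
  case (insert x T)
  have "has_nonneg_factorization (card T + 1)
      (\<lambda>i j. (if i \<in> T then P i j else 0) + (if i = x then 1 else 0) * P x j)"
    using insert.IH assms(1) unfolding nonneg_mat_def
    by (intro has_nonneg_factorization_add has_nonneg_factorization_outer) auto
  moreover have "(\<lambda>i j. (if i \<in> T then P i j else 0) + (if i = x then 1 else 0) * P x j)
      = (\<lambda>i j. if i \<in> insert x T then P i j else 0)"
    using insert.hyps by (auto simp: fun_eq_iff)
  ultimately show ?case using insert.hyps by simp
qed

lemma has_nonneg_factorization_transpose:
  assumes "has_nonneg_factorization r P"
  shows "has_nonneg_factorization r (\<lambda>j i. P i j)"
proof -
  obtain u v where "\<forall>k i. 0 \<le> u k i" "\<forall>k j. 0 \<le> v k j" "\<forall>i j. P i j = (\<Sum>k<r. u k i * v k j)"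
    using assms unfolding has_nonneg_factorization_def by blast
  then show ?thesis
    unfolding has_nonneg_factorization_def
    by (intro exI[of _ v] exI[of _ u]) (simp add: mult.commute)
qed

lemma sum_UNIV_split_Compl:
  fixes f :: "'a::finite \<Rightarrow> 'b::comm_monoid_add"
  shows "sum f UNIV = sum f S + sum f (- S)"
  by (metis Compl_eq_Diff_UNIV add.commute finite sum.subset_diff top_greatest)

lemma sum_row_sums_eq_sum_col_sums:
  "(\<Sum>i\<in>UNIV. row_sums P i) = (\<Sum>j\<in>UNIV. col_sums P j)"
  unfolding row_sums_def col_sums_def by (rule sum.swap)

lemma row_sums_transpose: "row_sums (\<lambda>j i. P i j) = col_sums P"
  by (simp add: row_sums_def col_sums_def)

lemma col_sums_transpose: "col_sums (\<lambda>j i. P i j) = row_sums P"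
  by (simp add: row_sums_def col_sums_def)

lemma row_sums_nonneg: "nonneg_mat P \<Longrightarrow> 0 \<le> row_sums P i"
  unfolding nonneg_mat_def row_sums_def by (simp add: sum_nonneg)

lemma nonneg_mat_block_eq_0:
  fixes P :: "'n::finite \<Rightarrow> 'm::finite \<Rightarrow> real"
  assumes "nonneg_mat P" "(\<Sum>k\<in>S. row_sums P k) = 0" "i \<in> S"
  shows "P i j = 0"
proof -
  have "row_sums P i = 0"
    using assms row_sums_nonneg[OF assms(1)] by (simp add: sum_nonneg_eq_0_iff)
  then show ?thesis
    using assms(1) unfolding nonneg_mat_def row_sums_def by (simp add: sum_nonneg_eq_0_iff)
qed

(* If S carries no mass, division by zero makes the block 0, which is then what P has there. *)
definition merge_rows :: "'n set \<Rightarrow> ('n \<Rightarrow> 'm::finite \<Rightarrow> real) \<Rightarrow> 'n \<Rightarrow> 'm \<Rightarrow> real" where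
  "merge_rows S P = (\<lambda>i j. if i \<in> S
     then row_sums P i * (\<Sum>k\<in>S. P k j) / (\<Sum>k\<in>S. row_sums P k) else P i j)"

lemma merge_rows_eq_outside: "i \<notin> S \<Longrightarrow> merge_rows S P i j = P i j"
  by (simp add: merge_rows_def)

lemma nonneg_mat_merge_rows: "nonneg_mat P \<Longrightarrow> nonneg_mat (merge_rows S P)"
  using row_sums_nonneg[of P] unfolding nonneg_mat_def merge_rows_def
  by (simp add: sum_nonneg)

lemma row_sums_merge_rows:
  fixes P :: "'n::finite \<Rightarrow> 'm::finite \<Rightarrow> real"
  assumes "nonneg_mat P"
  shows "row_sums (merge_rows S P) = row_sums P"
proof
  fix i
  show "row_sums (merge_rows S P) i = row_sums P i"
  proof (cases "i \<in> S \<and> (\<Sum>k\<in>S. row_sums P k) \<noteq> 0")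
    case True
    have "row_sums (merge_rows S P) i
        = row_sums P i * (\<Sum>j\<in>UNIV. \<Sum>k\<in>S. P k j) / (\<Sum>k\<in>S. row_sums P k)"
      using True by (simp add: merge_rows_def row_sums_def sum_distrib_left sum_divide_distrib)
    also have "(\<Sum>j\<in>UNIV. \<Sum>k\<in>S. P k j) = (\<Sum>k\<in>S. row_sums P k)"
      unfolding row_sums_def by (rule sum.swap)
    finally show ?thesis using True by simp
  next
    case False
    show ?thesis
    proof (cases "i \<in> S")
      case True
      with False have block: "(\<Sum>k\<in>S. row_sums P k) = 0" by simp
      then have "merge_rows S P i = (\<lambda>_. 0)" "P i = (\<lambda>_. 0)"
        using nonneg_mat_block_eq_0[OF assms block True] by (simp_all add: merge_rows_def fun_eq_iff)
      then show ?thesis by (simp add: row_sums_def)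
    qed (simp add: row_sums_def merge_rows_eq_outside)
  qed
qed

lemma col_sums_merge_rows:
  fixes P :: "'n::finite \<Rightarrow> 'm::finite \<Rightarrow> real"
  assumes "nonneg_mat P"
  shows "col_sums (merge_rows S P) = col_sums P"
proof
  fix j
  have "(\<Sum>i\<in>S. merge_rows S P i j)
      = (\<Sum>i\<in>S. row_sums P i) * (\<Sum>k\<in>S. P k j) / (\<Sum>k\<in>S. row_sums P k)"
    by (simp add: merge_rows_def sum_distrib_right sum_divide_distrib)
  also have "\<dots> = (\<Sum>i\<in>S. P i j)"
    using nonneg_mat_block_eq_0[OF assms] by (cases "(\<Sum>k\<in>S. row_sums P k) = 0") auto
  finally show "col_sums (merge_rows S P) j = col_sums P j"
    unfolding col_sums_def sum_UNIV_split_Compl[of _ S] by (simp add: merge_rows_eq_outside)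
qed

lemma has_nonneg_factorization_merge_rows:
  fixes P :: "'n::finite \<Rightarrow> 'm::finite \<Rightarrow> real"
  assumes "nonneg_mat P"
  shows "has_nonneg_factorization (card (- S) + 1) (merge_rows S P)"
proof -
  have "has_nonneg_factorization (card (- S) + 1) (\<lambda>i j.
      (if i \<in> - S then P i j else 0)
      + (if i \<in> S then row_sums P i else 0) * ((\<Sum>k\<in>S. P k j) / (\<Sum>k\<in>S. row_sums P k)))"
    using assms row_sums_nonneg[OF assms]
    by (intro has_nonneg_factorization_add has_nonneg_factorization_rows
        has_nonneg_factorization_outer) (auto simp: sum_nonneg nonneg_mat_def)
  moreover have "(\<lambda>i j. (if i \<in> - S then P i j else 0)
      + (if i \<in> S then row_sums P i else 0) * ((\<Sum>k\<in>S. P k j) / (\<Sum>k\<in>S. row_sums P k)))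
      = merge_rows S P"
    by (auto simp: merge_rows_def fun_eq_iff)
  ultimately show ?thesis by simp
qed

lemma frob_le_of_eq_off_block:
  fixes P Q C :: "'n::finite \<Rightarrow> 'm::finite \<Rightarrow> real"
  assumes P: "nonneg_mat P" and Q: "nonneg_mat Q"
    and off_block: "\<And>i j. i \<notin> S \<Longrightarrow> Q i j = P i j"
    and block_mass: "(\<Sum>i\<in>S. row_sums Q i) = (\<Sum>i\<in>S. row_sums P i)"
    and C: "\<And>i j. lo \<le> C i j" "\<And>i j. C i j \<le> hi"
  shows "frob C Q \<le> frob C P + (hi - lo) * (\<Sum>i\<in>S. row_sums P i)"
proof -
  have "(\<Sum>i\<in>S. \<Sum>j\<in>UNIV. C i j * Q i j) \<le> (\<Sum>i\<in>S. \<Sum>j\<in>UNIV. hi * Q i j)"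
    using Q C(2) unfolding nonneg_mat_def by (intro sum_mono mult_right_mono) auto
  also have "\<dots> = hi * (\<Sum>i\<in>S. row_sums Q i)"
    by (simp add: row_sums_def sum_distrib_left)
  finally have upper: "(\<Sum>i\<in>S. \<Sum>j\<in>UNIV. C i j * Q i j) \<le> hi * (\<Sum>i\<in>S. row_sums P i)"
    unfolding block_mass .
  have "lo * (\<Sum>i\<in>S. row_sums P i) = (\<Sum>i\<in>S. \<Sum>j\<in>UNIV. lo * P i j)"
    by (simp add: row_sums_def sum_distrib_left)
  also have "\<dots> \<le> (\<Sum>i\<in>S. \<Sum>j\<in>UNIV. C i j * P i j)"
    using P C(1) unfolding nonneg_mat_def by (intro sum_mono mult_right_mono) auto
  finally have lower: "lo * (\<Sum>i\<in>S. row_sums P i) \<le> (\<Sum>i\<in>S. \<Sum>j\<in>UNIV. C i j * P i j)" .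
  show ?thesis
    using upper lower off_block unfolding frob_def sum_UNIV_split_Compl[of _ S]
    by (simp add: left_diff_distrib)
qed

definition nonneg_rank_reducible :: "('n::finite \<Rightarrow> 'm::finite \<Rightarrow> real) \<Rightarrow> nat \<Rightarrow> real \<Rightarrow> bool" where
  "nonneg_rank_reducible C r L \<longleftrightarrow> (\<forall>P. nonneg_mat P \<longrightarrow> (\<exists>Q. nonneg_mat Q \<and>
     row_sums Q = row_sums P \<and> col_sums Q = col_sums P \<and> has_nonneg_factorization r Q \<and>
     frob C Q \<le> frob C P + (\<Sum>j\<in>UNIV. col_sums P j) * L))"

lemma exists_light_row_block:
  fixes P :: "'n::finite \<Rightarrow> 'm::finite \<Rightarrow> real"
  assumes P: "nonneg_mat P" and k: "1 \<le> k" "k \<le> CARD('n)"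
  shows "\<exists>S. card (- S) = k \<and>
    (\<Sum>i\<in>S. row_sums P i) \<le> ln (real CARD('n) / real k) * (\<Sum>i\<in>UNIV. row_sums P i)"
proof -
  define n where "n = CARD('n)"
  obtain S where card_S: "card S = n - k"
    and S_light: "real n * (\<Sum>i\<in>S. row_sums P i) \<le> real (n - k) * (\<Sum>i\<in>UNIV. row_sums P i)"
    using exists_subset_sum_le_average[of UNIV "n - k" "row_sums P"] unfolding n_def by auto
  have "(\<Sum>i\<in>S. row_sums P i) \<le> (real n - real k) / real n * (\<Sum>i\<in>UNIV. row_sums P i)"
    using S_light k unfolding n_def by (simp add: field_simps of_nat_diff)
  also have "\<dots> \<le> ln (real n / real k) * (\<Sum>i\<in>UNIV. row_sums P i)"
    using k unfolding n_def
    by (intro mult_right_mono one_minus_div_le_ln) (auto simp: sum_nonneg row_sums_nonneg[OF P])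
  finally have "(\<Sum>i\<in>S. row_sums P i) \<le> ln (real n / real k) * (\<Sum>i\<in>UNIV. row_sums P i)" .
  moreover have "card (- S) = k"
    using card_S k unfolding n_def by (simp add: Compl_eq_Diff_UNIV card_Diff_subset)
  ultimately show ?thesis unfolding n_def by blast
qed

lemma nonneg_rank_reducible_rows:
  fixes C :: "'n::finite \<Rightarrow> 'm::finite \<Rightarrow> real"
  assumes C: "\<And>i j. lo \<le> C i j" "\<And>i j. C i j \<le> hi" and r: "2 \<le> r" "r \<le> CARD('n)"
  shows "nonneg_rank_reducible C r ((hi - lo) * ln (real CARD('n) / real (r - 1)))"
  unfolding nonneg_rank_reducible_def
proof (intro allI impI)
  fix P :: "'n \<Rightarrow> 'm \<Rightarrow> real"
  assume P: "nonneg_mat P"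
  let ?ln = "ln (real CARD('n) / real (r - 1))"
  have "1 \<le> r - 1" "r - 1 \<le> CARD('n)" using r by auto
  then obtain S where card_S: "card (- S) = r - 1"
    and light: "(\<Sum>i\<in>S. row_sums P i) \<le> ?ln * (\<Sum>i\<in>UNIV. row_sums P i)"
    using exists_light_row_block[OF P] by blast
  have rank: "has_nonneg_factorization r (merge_rows S P)"
    using has_nonneg_factorization_merge_rows[OF P, of S] card_S r by simp
  have block_mass: "(\<Sum>i\<in>S. row_sums (merge_rows S P) i) = (\<Sum>i\<in>S. row_sums P i)"
    by (simp add: row_sums_merge_rows[OF P])
  have "frob C (merge_rows S P) \<le> frob C P + (hi - lo) * (\<Sum>i\<in>S. row_sums P i)"
    by (rule frob_le_of_eq_off_block[OF P nonneg_mat_merge_rows[OF P] merge_rows_eq_outside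
          block_mass C])
  also have "\<dots> \<le> frob C P + (hi - lo) * (?ln * (\<Sum>i\<in>UNIV. row_sums P i))"
    using light C[of undefined undefined] by (intro add_left_mono mult_left_mono) auto
  finally have "frob C (merge_rows S P) \<le> frob C P + (\<Sum>j\<in>UNIV. col_sums P j) * ((hi - lo) * ?ln)"
    unfolding sum_row_sums_eq_sum_col_sums by (simp add: ac_simps)
  then show "\<exists>Q. nonneg_mat Q \<and> row_sums Q = row_sums P \<and> col_sums Q = col_sums P \<and>
      has_nonneg_factorization r Q \<and> frob C Q \<le> frob C P + (\<Sum>j\<in>UNIV. col_sums P j) * ((hi - lo) * ?ln)"
    using nonneg_mat_merge_rows[OF P] row_sums_merge_rows[OF P] col_sums_merge_rows[OF P] rank
    by blast
qed

lemma nonneg_rank_reducible_transpose: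
  fixes C :: "'n::finite \<Rightarrow> 'm::finite \<Rightarrow> real"
  assumes "nonneg_rank_reducible (\<lambda>j i. C i j) r L"
  shows "nonneg_rank_reducible C r L"
  unfolding nonneg_rank_reducible_def
proof (intro allI impI)
  fix P :: "'n \<Rightarrow> 'm \<Rightarrow> real"
  assume "nonneg_mat P"
  then have "nonneg_mat (\<lambda>j i. P i j)" by (simp add: nonneg_mat_def)
  then obtain Q where Q: "nonneg_mat Q" "row_sums Q = col_sums P" "col_sums Q = row_sums P"
      "has_nonneg_factorization r Q"
      "frob (\<lambda>j i. C i j) Q \<le> frob (\<lambda>j i. C i j) (\<lambda>j i. P i j) + (\<Sum>i\<in>UNIV. row_sums P i) * L"
    using assms row_sums_transpose[of P] col_sums_transpose[of P]
    unfolding nonneg_rank_reducible_def by metis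
  have "frob C (\<lambda>i j. Q j i) = frob (\<lambda>j i. C i j) Q"
    and "frob (\<lambda>j i. C i j) (\<lambda>j i. P i j) = frob C P"
    unfolding frob_def by (rule sum.swap)+
  then show "\<exists>Q. nonneg_mat Q \<and> row_sums Q = row_sums P \<and> col_sums Q = col_sums P \<and>
      has_nonneg_factorization r Q \<and> frob C Q \<le> frob C P + (\<Sum>j\<in>UNIV. col_sums P j) * L"
    using Q has_nonneg_factorization_transpose[OF Q(4)]
      row_sums_transpose[of "\<lambda>i j. Q j i"] col_sums_transpose[of "\<lambda>i j. Q j i"]
    by (intro exI[of _ "\<lambda>i j. Q j i"])
      (auto simp: nonneg_mat_def sum_row_sums_eq_sum_col_sums)
qed

lemma nonneg_rank_reducible_cost_range:
  fixes C :: "'n::finite \<Rightarrow> 'm::finite \<Rightarrow> real"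
  assumes "\<And>i j. lo \<le> C i j" "\<And>i j. C i j \<le> hi" "2 \<le> r" "r \<le> min CARD('n) CARD('m)"
  shows "nonneg_rank_reducible C r ((hi - lo) * ln (real (min CARD('n) CARD('m)) / real (r - 1)))"
proof (cases "CARD('n) \<le> CARD('m)")
  case True
  then show ?thesis
    using assms nonneg_rank_reducible_rows[of lo C hi r] by (simp add: min_def)
next
  case False
  have "nonneg_rank_reducible (\<lambda>j i. C i j) r ((hi - lo) * ln (real CARD('m) / real (r - 1)))"
    using assms by (intro nonneg_rank_reducible_rows) auto
  then show ?thesis
    using False by (simp add: min_def nonneg_rank_reducible_transpose)
qed

lemma kl_term_nonneg:
  assumes "0 \<le> x" "0 \<le> y"
  shows "0 \<le> kl_term x y"
proof -
  have "x - y \<le> x * ln (x / y)" if "0 < x" "0 < y"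
  proof -
    have "ln (y / x) \<le> y / x - 1" using that by (intro ln_le_minus_one) simp
    then have "x * (1 - y / x) \<le> x * ln (x / y)"
      using that by (intro mult_left_mono) (auto simp: ln_div)
    moreover have "x * (1 - y / x) = x - y" using that by (simp add: field_simps)
    ultimately show ?thesis by simp
  qed
  then show ?thesis using assms unfolding kl_term_def by auto
qed

lemma KL_nonneg: "(\<And>i. 0 \<le> x i) \<Longrightarrow> (\<And>i. 0 \<le> y i) \<Longrightarrow> 0 \<le> KL x y"
  unfolding KL_def by (simp add: sum_nonneg kl_term_nonneg)

lemma frob_nonneg: "\<forall>i j. 0 \<le> C i j \<Longrightarrow> nonneg_mat P \<Longrightarrow> 0 \<le> frob C P"
  unfolding frob_def nonneg_mat_def by (simp add: sum_nonneg)

lemma SRW_nonneg: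
  fixes C :: "'n::finite \<Rightarrow> 'm::finite \<Rightarrow> real"
  assumes "\<forall>i j. 0 \<le> C i j" "\<forall>i. 0 \<le> a i" "0 \<le> \<tau>"
  shows "0 \<le> SRW C a b \<tau>"
  unfolding SRW_def
proof (rule Inf_greatest, clarify)
  fix P :: "'n \<Rightarrow> 'm \<Rightarrow> real"
  assume P: "nonneg_mat P"
  have "0 \<le> frob C P" using frob_nonneg[OF assms(1) P] .
  moreover have "0 \<le> KL (row_sums P) a"
    using assms(2) by (intro KL_nonneg row_sums_nonneg[OF P]) auto
  ultimately show "0 \<le> SR_obj C a \<tau> P"
    using assms(3) unfolding SR_obj_def by simp
qed

lemma SRW_le_SRW_r: "SRW C a b \<tau> \<le> SRW_r C a b \<tau> r"
  unfolding SRW_def SRW_r_def by (rule Inf_superset_mono) blast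

lemma SRW_r_less_PInf:
  assumes "a i0 \<noteq> 0" "\<forall>j. 0 \<le> b j" "1 \<le> r"
  shows "SRW_r C a b \<tau> r < \<infinity>"
proof -
  define P where "P i j = (if i = i0 then b j else 0)" for i j
  have "has_nonneg_factorization 1 (\<lambda>i j. (if i = i0 then 1 else 0) * b j)"
    using assms(2) by (intro has_nonneg_factorization_outer) auto
  moreover have "(\<lambda>i j. (if i = i0 then 1 else 0) * b j) = P"
    by (simp add: P_def fun_eq_iff)
  ultimately have "nonneg_rank P \<le> r"
    using nonneg_rank_le assms(3) order_trans by metis
  moreover have "nonneg_mat P" "col_sums P = b"
    using assms(2) by (auto simp: P_def nonneg_mat_def col_sums_def)
  ultimately have "SRW_r C a b \<tau> r \<le> SR_obj C a \<tau> P"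
    unfolding SRW_r_def by (intro Inf_lower) blast
  also have "\<dots> < \<infinity>"
  proof -
    have "\<exists>c. kl_term (row_sums P i) (a i) = ereal c" for i
      using assms(1) by (cases "i = i0") (auto simp: kl_term_def row_sums_def P_def)
    then obtain c where "\<And>i. kl_term (row_sums P i) (a i) = ereal (c i)"
      by metis
    then have "KL (row_sums P) a = ereal (\<Sum>i\<in>UNIV. c i)"
      by (simp add: KL_def)
    then show ?thesis by (simp add: SR_obj_def)
  qed
  finally show ?thesis .
qed

lemma SRW_r_le_SRW_add:
  fixes C :: "'n::finite \<Rightarrow> 'm::finite \<Rightarrow> real"
  assumes "nonneg_rank_reducible C r L"
  shows "SRW_r C a b \<tau> r \<le> SRW C a b \<tau> + ereal ((\<Sum>j\<in>UNIV. b j) * L)"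
proof -
  let ?d = "ereal ((\<Sum>j\<in>UNIV. b j) * L)"
  have "SRW_r C a b \<tau> r - ?d \<le> SRW C a b \<tau>"
    unfolding SRW_def
  proof (rule Inf_greatest)
    fix x
    assume "x \<in> {SR_obj C a \<tau> P | P. nonneg_mat P \<and> col_sums P = b}"
    then obtain P where P: "nonneg_mat P" "col_sums P = b" and x: "x = SR_obj C a \<tau> P"
      by blast
    then obtain Q where Q: "nonneg_mat Q" "row_sums Q = row_sums P" "col_sums Q = b"
        "has_nonneg_factorization r Q" "frob C Q \<le> frob C P + (\<Sum>j\<in>UNIV. b j) * L"
      using assms unfolding nonneg_rank_reducible_def by metis
    have "SRW_r C a b \<tau> r \<le> SR_obj C a \<tau> Q"
      unfolding SRW_r_def using Q nonneg_rank_le by (intro Inf_lower) blast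
    also have "\<dots> \<le> (ereal (frob C P) + ?d) + ereal \<tau> * KL (row_sums P) a"
      unfolding SR_obj_def Q(2) using Q(5) by (intro add_right_mono) simp
    also have "\<dots> = SR_obj C a \<tau> P + ?d"
      unfolding SR_obj_def by (simp only: ac_simps)
    finally show "SRW_r C a b \<tau> r - ?d \<le> x"
      unfolding x by (simp add: ereal_minus_le)
  qed
  then show ?thesis by (simp add: ereal_minus_le)
qed

lemma ereal_abs_diff_le:
  fixes x y :: ereal
  assumes "0 \<le> y" "y \<le> x" "x \<le> y + ereal d" "x < \<infinity>"
  shows "\<bar>x - y\<bar> \<le> ereal d"
  using assms by (cases x; cases y) auto

lemma bdd_below_frob_image:
  "\<forall>i j. 0 \<le> C i j \<Longrightarrow> bdd_below (frob C ` transport_polytope a b)"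
  by (rule bdd_belowI[of _ 0]) (auto simp: transport_polytope_def frob_nonneg)

lemma W_le_W_r:
  assumes "\<forall>i j. 0 \<le> C i j" "P \<in> transport_polytope a b" "nonneg_rank P \<le> r"
  shows "W C a b \<le> W_r C a b r"
  unfolding W_def W_r_def
  using assms bdd_below_frob_image[OF assms(1)] by (intro cInf_superset_mono) auto

lemma W_r_le_W_add:
  fixes C :: "'n::finite \<Rightarrow> 'm::finite \<Rightarrow> real"
  assumes "nonneg_rank_reducible C r L" "\<forall>i j. 0 \<le> C i j" "transport_polytope a b \<noteq> {}"
  shows "W_r C a b r \<le> W C a b + (\<Sum>j\<in>UNIV. b j) * L"
proof -
  have "W_r C a b r - (\<Sum>j\<in>UNIV. b j) * L \<le> W C a b"
    unfolding W_def
  proof (rule cInf_greatest)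
    fix x
    assume "x \<in> frob C ` transport_polytope a b"
    then obtain P where P: "nonneg_mat P" "row_sums P = a" "col_sums P = b" "x = frob C P"
      by (auto simp: transport_polytope_def)
    then obtain Q where Q: "nonneg_mat Q" "row_sums Q = a" "col_sums Q = b"
        "has_nonneg_factorization r Q" "frob C Q \<le> frob C P + (\<Sum>j\<in>UNIV. b j) * L"
      using assms(1) unfolding nonneg_rank_reducible_def by metis
    have "bdd_below (frob C ` {P \<in> transport_polytope a b. nonneg_rank P \<le> r})"
      using bdd_below_frob_image[OF assms(2)] by (rule bdd_below_mono) auto
    then have "W_r C a b r \<le> frob C Q"
      unfolding W_r_def using Q nonneg_rank_le
      by (intro cInf_lower) (auto simp: transport_polytope_def)
    then show "W_r C a b r - (\<Sum>j\<in>UNIV. b j) * L \<le> x" using Q(5) P(4) by simp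
  qed (use assms(3) in simp)
  then show ?thesis by simp
qed

lemma outer_in_transport_polytope:
  assumes "a \<in> prob_simplex" "b \<in> prob_simplex"
  shows "(\<lambda>i j. a i * b j) \<in> transport_polytope a b"
  using assms unfolding transport_polytope_def prob_simplex_def nonneg_mat_def row_sums_def col_sums_def
  by (simp add: sum_distrib_left[symmetric] sum_distrib_right[symmetric])

lemma abs_SRW_r_minus_SRW_le:
  fixes C :: "'n::finite \<Rightarrow> 'm::finite \<Rightarrow> real"
  assumes "nonneg_rank_reducible C r L" "1 \<le> r"
    and "\<forall>i j. 0 \<le> C i j" "\<forall>i. 0 \<le> a i" "a i0 \<noteq> 0" "\<forall>j. 0 \<le> b j" "0 \<le> \<tau>"
  shows "\<bar>SRW_r C a b \<tau> r - SRW C a b \<tau>\<bar> \<le> ereal ((\<Sum>j\<in>UNIV. b j) * L)"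
  using assms
  by (intro ereal_abs_diff_le SRW_nonneg SRW_le_SRW_r SRW_r_le_SRW_add SRW_r_less_PInf) auto

lemma abs_W_r_minus_W_le:
  fixes C :: "'n::finite \<Rightarrow> 'm::finite \<Rightarrow> real"
  assumes reducible: "nonneg_rank_reducible C r L" and "1 \<le> r" and C: "\<forall>i j. 0 \<le> C i j"
    and ab: "a \<in> prob_simplex" "b \<in> prob_simplex"
  shows "\<bar>W_r C a b r - W C a b\<bar> \<le> L"
proof -
  have outer: "(\<lambda>i j. a i * b j) \<in> transport_polytope a b"
    using ab by (rule outer_in_transport_polytope)
  have "has_nonneg_factorization 1 (\<lambda>i j. a i * b j)"
    using ab by (intro has_nonneg_factorization_outer) (auto simp: prob_simplex_def)
  then have "nonneg_rank (\<lambda>i j. a i * b j) \<le> r"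
    using nonneg_rank_le \<open>1 \<le> r\<close> order_trans by blast
  then have "W C a b \<le> W_r C a b r"
    by (rule W_le_W_r[OF C outer])
  moreover have "W_r C a b r \<le> W C a b + L"
    using W_r_le_W_add[OF reducible C] outer ab(2) by (fastforce simp: prob_simplex_def)
  ultimately show ?thesis
    by (simp add: abs_le_iff)
qed

theorem proposition6:
  fixes C :: "'n::finite \<Rightarrow> 'm::finite \<Rightarrow> real"
    and a :: "'n \<Rightarrow> real" and b :: "'m \<Rightarrow> real"
    and \<tau> :: real and r :: nat
  assumes C_nonneg: "\<forall>i j. 0 \<le> C i j"
    and a_nonneg: "\<forall>i. 0 \<le> a i" and a_nonzero: "\<exists>i. a i \<noteq> 0"
    and b_nonneg: "\<forall>j. 0 \<le> b j"
    and tau_pos: "\<tau> > 0"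
    and r_ge: "2 \<le> r" and r_le: "r \<le> min CARD('n) CARD('m)"
  shows "\<bar>SRW_r C a b \<tau> r - SRW C a b \<tau>\<bar>
           \<le> ereal ((\<Sum>j\<in>UNIV. b j) * (Max (case_prod C ` UNIV) - Min (case_prod C ` UNIV))
                    * ln (real (min CARD('n) CARD('m)) / real (r - 1)))
      \<and> (a \<in> prob_simplex \<and> b \<in> prob_simplex \<longrightarrow>
           \<bar>W_r C a b r - W C a b\<bar>
             \<le> (Max (case_prod C ` UNIV) - Min (case_prod C ` UNIV))
                 * ln (real (min CARD('n) CARD('m)) / real (r - 1)))"
proof -
  define L where "L = (Max (case_prod C ` UNIV) - Min (case_prod C ` UNIV))
    * ln (real (min CARD('n) CARD('m)) / real (r - 1))"
  have reducible: "nonneg_rank_reducible C r L"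
    unfolding L_def using r_ge r_le by (intro nonneg_rank_reducible_cost_range Min_le Max_ge) auto
  obtain i0 where "a i0 \<noteq> 0" using a_nonzero by blast
  then have "\<bar>SRW_r C a b \<tau> r - SRW C a b \<tau>\<bar> \<le> ereal ((\<Sum>j\<in>UNIV. b j) * L)"
    using reducible r_ge C_nonneg a_nonneg b_nonneg tau_pos
    by (intro abs_SRW_r_minus_SRW_le) auto
  moreover have "a \<in> prob_simplex \<and> b \<in> prob_simplex \<longrightarrow> \<bar>W_r C a b r - W C a b\<bar> \<le> L"
    using abs_W_r_minus_W_le[OF reducible _ C_nonneg] r_ge by simp
  ultimately show ?thesis
    unfolding L_def by (simp add: mult.assoc)
qed

end
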